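(* Let $M \in \mathbb{R}^{d' \times n}$ and $B \in \mathbb{R}^{n \times d}$ be Gale dual, i.e. $\mathrm{im}(B)=\ker(M)$ and $\ker(B)=\{0\}$. Let $S \subseteq \mathbb{R}^n$ be a vector subspace and $A \in \mathbb{R}^{m \times n}$ with $S = \ker(A)$. The following are equivalent: (i) the map $x \mapsto x^M$ is injective on $(x'+S) \cap \mathbb{R}^n_+$ for all $x' \in \mathbb{R}^n_+$; (ii) $\sigma(\ker(M)) \cap \sigma(S) = \{0\}$; (iii) for every $x^* \in \mathbb{R}^n_+$, the map $f_{x^*}\colon \mathbb{R}^d_+ \to \mathbb{R}^m$, $\xi \mapsto A_{x^*}\, \xi^B$, is injective.
   Context: $\mathbb{R}_+$ denotes the strictly positive reals. For $x\in\mathbb{R}^n_+$, $(x^M)_k=\prod_i x_i^{m_{ki}}$; for $\xi\in\mathbb{R}^d_+$, $(\xi^B)_i=\prod_{j}\xi_j^{b_{ij}}$ (real exponents). $A_{x^*}=A\,\mathrm{diag}(x^* )$. $\sigma$ is the componentwise sign vector, $\sigma(T)=\{\sigma(x)\mid x\in T\}$, and $0$ denotes the zero sign vector. *)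

theory Defs
  imports "HOL-Analysis.Analysis"
begin

definition posorth :: "(real ^ 'n) set" where
  "posorth = {x. \<forall>i. x $ i > 0}"

definition mpow :: "real ^ 'n ^ 'k \<Rightarrow> real ^ 'n \<Rightarrow> real ^ 'k" where
  "mpow M x = (\<chi> k. \<Prod>i\<in>UNIV. (x $ i) powr (M $ k $ i))"

definition diagm :: "real ^ 'n \<Rightarrow> real ^ 'n ^ 'n" where
  "diagm x = (\<chi> i j. if i = j then x $ i else 0)"

definition signvec :: "real ^ 'n \<Rightarrow> real ^ 'n" where
  "signvec x = (\<chi> i. sgn (x $ i))"

end

theory Submission
  imports Defs
begin

text \<open>In logarithmic coordinates \<open>x = exp a\<close> the monomial map becomes the linear map
  \<open>a \<mapsto> M a\<close>, and \<open>exp\<close> is strictly increasing in every coordinate, so \<open>exp a - exp b\<close> has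
  the sign vector of \<open>a - b\<close>. Hence a failure of injectivity in (i) or (iii) is the same as
  a nonzero pair \<open>u \<in> ker M = im B\<close>, \<open>v \<in> S\<close> with equal sign vectors. Conversely, any such
  pair is realised as \<open>u = a' - a\<close>, \<open>v = exp a' - exp a\<close> for a suitable base point \<open>a\<close>,
  because a positive multiple of \<open>exp u\<^sub>i - 1\<close> can take every value of sign \<open>sgn u\<^sub>i\<close>.\<close>

definition vec_exp :: "real ^ 'n \<Rightarrow> real ^ 'n" where
  "vec_exp a = (\<chi> i. exp (a $ i))"

definition signs_meet_trivially :: "(real ^ 'n) set \<Rightarrow> (real ^ 'n) set \<Rightarrow> bool" where
  "signs_meet_trivially U V \<longleftrightarrow> (\<forall>u\<in>U. \<forall>v\<in>V. signvec u = signvec v \<longrightarrow> v = 0)"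

lemma vec_exp_inject [simp]: "vec_exp a = vec_exp b \<longleftrightarrow> a = b"
  by (simp add: vec_exp_def vec_eq_iff)

lemma posorth_eq_range_vec_exp: "posorth = range vec_exp"
proof (intro set_eqI iffI)
  fix x :: "real ^ 'n"
  assume "x \<in> posorth"
  then have "x = vec_exp (\<chi> i. ln (x $ i))"
    by (simp add: posorth_def vec_exp_def vec_eq_iff)
  then show "x \<in> range vec_exp" by blast
qed (auto simp: posorth_def vec_exp_def)

lemma mpow_vec_exp: "mpow M (vec_exp a) = vec_exp (M *v a)"
  by (simp add: mpow_def vec_exp_def matrix_vector_mult_def vec_eq_iff powr_def exp_sum
      mult.commute)

lemma diagm_mult_vec_exp: "diagm (vec_exp a) *v vec_exp b = vec_exp (a + b)"
  unfolding diagm_def vec_exp_def matrix_vector_mult_def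
  by (simp add: vec_eq_iff exp_add if_distrib[of "\<lambda>t. t * _"] cong: if_cong)

lemma signvec_eq_0_iff [simp]: "signvec v = 0 \<longleftrightarrow> v = 0"
  by (simp add: signvec_def vec_eq_iff sgn_0_0)

lemma signvec_0 [simp]: "signvec 0 = 0"
  by simp

lemma sgn_exp_diff: "sgn (exp a - exp b) = sgn (a - b :: real)"
  by (cases "a < b"; cases "a = b") (auto simp: sgn_if)

lemma signvec_vec_exp_diff: "signvec (vec_exp a - vec_exp b) = signvec (a - b)"
  by (simp add: signvec_def vec_exp_def vec_eq_iff sgn_exp_diff)

lemma exists_exp_diff_eq:
  assumes "sgn u = sgn (v :: real)"
  shows "\<exists>a. exp (a + u) - exp a = v"
proof (cases "u = 0")
  case True
  with assms show ?thesis by (simp add: sgn_0_0)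
next
  case False
  define c where "c = v / (exp u - 1)"
  have "exp u - 1 \<noteq> 0" using False by simp
  have "c > 0"
    using assms False by (auto simp: c_def sgn_if divide_neg_neg split: if_splits)
  then have "exp (ln c + u) - exp (ln c) = c * (exp u - 1)"
    by (simp add: exp_add algebra_simps)
  also have "\<dots> = v" using \<open>exp u - 1 \<noteq> 0\<close> by (simp add: c_def)
  finally have "exp (ln c + u) - exp (ln c) = v" .
  then show ?thesis ..
qed

lemma exists_vec_exp_diff_eq:
  assumes "signvec u = signvec v"
  shows "\<exists>a. vec_exp (a + u) - vec_exp a = v"
proof -
  have "\<forall>i. \<exists>t. exp (t + u $ i) - exp t = v $ i"
    using assms exists_exp_diff_eq by (simp add: signvec_def vec_eq_iff)
  then obtain t where "\<And>i. exp (t i + u $ i) - exp (t i) = v $ i" by metis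
  then have "vec_exp ((\<chi> i. t i) + u) - vec_exp (\<chi> i. t i) = v"
    by (simp add: vec_exp_def vec_eq_iff)
  then show ?thesis ..
qed

lemma signvec_image_Int_eq_zero_iff:
  assumes "0 \<in> U" and "0 \<in> V"
  shows "signvec ` U \<inter> signvec ` V = {0} \<longleftrightarrow> signs_meet_trivially U V"
proof
  assume triv: "signvec ` U \<inter> signvec ` V = {0}"
  show "signs_meet_trivially U V"
    unfolding signs_meet_trivially_def
  proof (intro ballI impI)
    fix u v assume "u \<in> U" "v \<in> V" "signvec u = signvec v"
    then have "signvec v \<in> signvec ` U \<inter> signvec ` V" by (metis IntI imageI)
    with triv show "v = 0" by simp
  qed
next
  assume signs: "signs_meet_trivially U V"
  have "signvec ` U \<inter> signvec ` V \<subseteq> {0}"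
    using signs unfolding signs_meet_trivially_def by auto
  moreover have "0 \<in> signvec ` U \<inter> signvec ` V"
    using assms signvec_0 by (metis IntI imageI)
  ultimately show "signvec ` U \<inter> signvec ` V = {0}" by blast
qed

lemma inj_on_mpow_translates_iff:
  assumes "subspace S"
  shows "(\<forall>x' \<in> posorth. inj_on (mpow M) ((\<lambda>s. x' + s) ` S \<inter> posorth))
    \<longleftrightarrow> signs_meet_trivially {u. M *v u = 0} S"
proof
  assume inj: "\<forall>x' \<in> posorth. inj_on (mpow M) ((\<lambda>s. x' + s) ` S \<inter> posorth)"
  show "signs_meet_trivially {u. M *v u = 0} S"
    unfolding signs_meet_trivially_def
  proof (intro ballI impI)
    fix u v
    assume u: "u \<in> {u. M *v u = 0}" and v: "v \<in> S" and uv: "signvec u = signvec v"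
    obtain a where a: "vec_exp (a + u) - vec_exp a = v"
      using exists_vec_exp_diff_eq[OF uv] ..
    have "mpow M (vec_exp (a + u)) = mpow M (vec_exp a)"
      using u by (simp add: mpow_vec_exp matrix_vector_right_distrib)
    moreover have "vec_exp (a + u) \<in> (\<lambda>s. vec_exp a + s) ` S \<inter> posorth"
      using a v by (force simp: posorth_eq_range_vec_exp)
    moreover have "vec_exp a \<in> (\<lambda>s. vec_exp a + s) ` S \<inter> posorth"
      using subspace_0[OF assms] by (force simp: posorth_eq_range_vec_exp)
    moreover have "inj_on (mpow M) ((\<lambda>s. vec_exp a + s) ` S \<inter> posorth)"
      using inj by (simp add: posorth_eq_range_vec_exp)
    ultimately have "vec_exp (a + u) = vec_exp a"
      by (auto dest: inj_onD)
    with a show "v = 0" by simp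
  qed
next
  assume signs: "signs_meet_trivially {u. M *v u = 0} S"
  show "\<forall>x' \<in> posorth. inj_on (mpow M) ((\<lambda>s. x' + s) ` S \<inter> posorth)"
  proof (intro ballI inj_onI)
    fix x' x y
    assume x: "x \<in> (\<lambda>s. x' + s) ` S \<inter> posorth" and y: "y \<in> (\<lambda>s. x' + s) ` S \<inter> posorth"
      and eq: "mpow M x = mpow M y"
    obtain p q where p: "x = vec_exp p" and q: "y = vec_exp q"
      using x y by (auto simp: posorth_eq_range_vec_exp)
    have "x - y \<in> S" using x y subspace_diff[OF assms] by auto
    moreover have "M *v (p - q) = 0"
      using eq by (simp add: p q mpow_vec_exp matrix_vector_mult_diff_distrib)
    moreover have "signvec (p - q) = signvec (x - y)"
      by (simp add: p q signvec_vec_exp_diff)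
    ultimately have "x - y = 0" using signs unfolding signs_meet_trivially_def by blast
    then show "x = y" by simp
  qed
qed

lemma inj_on_scaled_monomial_iff:
  fixes B :: "real ^ 'd ^ 'n" and A :: "real ^ 'n ^ 'm"
  assumes B_inj: "{\<xi>. B *v \<xi> = 0} = {0}"
  shows "(\<forall>xs \<in> posorth. inj_on (\<lambda>\<xi>. (A ** diagm xs) *v mpow B \<xi>) posorth)
    \<longleftrightarrow> signs_meet_trivially (range (\<lambda>\<xi>. B *v \<xi>)) {v. A *v v = 0}"
proof
  assume inj: "\<forall>xs \<in> posorth. inj_on (\<lambda>\<xi>. (A ** diagm xs) *v mpow B \<xi>) posorth"
  show "signs_meet_trivially (range (\<lambda>\<xi>. B *v \<xi>)) {v. A *v v = 0}"
    unfolding signs_meet_trivially_def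
  proof (intro ballI impI)
    fix u v
    assume "u \<in> range (\<lambda>\<xi>. B *v \<xi>)" and v: "v \<in> {v. A *v v = 0}" and uv: "signvec u = signvec v"
    then obtain \<eta> where \<eta>: "u = B *v \<eta>" by blast
    obtain a where a: "vec_exp (a + u) - vec_exp a = v"
      using exists_vec_exp_diff_eq[OF uv] ..
    have "A *v vec_exp (a + u) - A *v vec_exp a = 0"
      using v a by (simp flip: matrix_vector_mult_diff_distrib)
    then have eq: "(A ** diagm (vec_exp a)) *v mpow B (vec_exp \<eta>)
        = (A ** diagm (vec_exp a)) *v mpow B (vec_exp 0)"
      by (simp add: \<eta> mpow_vec_exp diagm_mult_vec_exp matrix_vector_mul_assoc[symmetric])
    have "inj_on (\<lambda>\<xi>. (A ** diagm (vec_exp a)) *v mpow B \<xi>) posorth"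
      using inj by (simp add: posorth_eq_range_vec_exp)
    from this eq have "vec_exp \<eta> = vec_exp 0"
      by (rule inj_onD) (simp_all add: posorth_eq_range_vec_exp)
    then have "\<eta> = 0" by simp
    then show "v = 0" using uv by (simp add: \<eta>)
  qed
next
  assume signs: "signs_meet_trivially (range (\<lambda>\<xi>. B *v \<xi>)) {v. A *v v = 0}"
  show "\<forall>xs \<in> posorth. inj_on (\<lambda>\<xi>. (A ** diagm xs) *v mpow B \<xi>) posorth"
  proof (intro ballI inj_onI)
    fix xs \<xi> \<zeta>
    assume "xs \<in> posorth" "\<xi> \<in> posorth" "\<zeta> \<in> posorth"
      and eq: "(A ** diagm xs) *v mpow B \<xi> = (A ** diagm xs) *v mpow B \<zeta>"
    then obtain a p q where xs: "xs = vec_exp a" and \<xi>: "\<xi> = vec_exp p" and \<zeta>: "\<zeta> = vec_exp q"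
      by (auto simp: posorth_eq_range_vec_exp)
    let ?v = "vec_exp (a + B *v p) - vec_exp (a + B *v q)"
    have "A *v ?v = 0"
      using eq by (simp add: xs \<xi> \<zeta> mpow_vec_exp diagm_mult_vec_exp
          matrix_vector_mul_assoc[symmetric] matrix_vector_mult_diff_distrib)
    moreover have "signvec (B *v (p - q)) = signvec ?v"
      by (simp add: signvec_vec_exp_diff matrix_vector_mult_diff_distrib)
    ultimately have "?v = 0"
      using signs rangeI[of "\<lambda>\<xi>. B *v \<xi>" "p - q"] unfolding signs_meet_trivially_def by blast
    then have "p - q \<in> {\<xi>. B *v \<xi> = 0}"
      using \<open>signvec (B *v (p - q)) = signvec ?v\<close> by simp
    then have "p - q = 0" using B_inj by simp
    then show "\<xi> = \<zeta>" by (simp add: \<xi> \<zeta>)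
  qed
qed

theorem mainTheorem17:
  fixes M :: "real ^ 'n ^ 'dp" and B :: "real ^ 'd ^ 'n"
    and A :: "real ^ 'n ^ 'm" and S :: "(real ^ 'n) set"
  assumes gale_im: "range (\<lambda>\<xi>. B *v \<xi>) = {x. M *v x = 0}"
    and gale_ker: "{\<xi>. B *v \<xi> = 0} = {0}"
    and S_sub: "subspace S"
    and S_ker: "S = {x. A *v x = 0}"
  shows "((\<forall>x' \<in> posorth. inj_on (mpow M) ((\<lambda>s. x' + s) ` S \<inter> posorth))
           \<longleftrightarrow> (signvec ` {x. M *v x = 0} \<inter> signvec ` S = {0}))
       \<and> ((signvec ` {x. M *v x = 0} \<inter> signvec ` S = {0})
           \<longleftrightarrow> (\<forall>xs \<in> posorth. inj_on (\<lambda>\<xi>. (A ** diagm xs) *v mpow B \<xi>) posorth))"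
proof -
  have signs: "signvec ` {x. M *v x = 0} \<inter> signvec ` S = {0}
      \<longleftrightarrow> signs_meet_trivially {u. M *v u = 0} S"
    using signvec_image_Int_eq_zero_iff[of "{u. M *v u = 0}" S] subspace_0[OF S_sub] by simp
  have iii: "(\<forall>xs \<in> posorth. inj_on (\<lambda>\<xi>. (A ** diagm xs) *v mpow B \<xi>) posorth)
      \<longleftrightarrow> signs_meet_trivially {u. M *v u = 0} S"
    using inj_on_scaled_monomial_iff[OF gale_ker, of A] by (simp add: gale_im S_ker)
  show ?thesis
    unfolding signs iii inj_on_mpow_translates_iff[OF S_sub] by simp
qed

end
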